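(* Consider a finite set $\mathcal{U}$ of users with traffic demands $T_u>0$ and attenuations $\ell_u>0$, constants $g,N_0,\Gamma>0$, $c\in(0,1)$, and $T_{tot}=\sum_{u}T_u$. For $W>0$ let $\mathit{EE}_{opt}(W)$ be the maximum of $\mathit{EE}=\frac{cT_{tot}}{\sum_u p_u}$ over allocations $w_u>0$ with $\sum_u w_u=W$ and $p_u=\frac{gN_0\Gamma}{\ell_u}(2^{T_u/w_u}-1)w_u$. Then the optimal energy efficiency admits the explicit upper bound, attained as $W\to\infty$ (low SNR regime), $$\mathit{EE}^*=\frac{cT_{tot}}{gN_0\Gamma\ln 2\sum_{u\in\mathcal{U}}\frac{T_u}{\ell_u}},$$ i.e. $\mathit{EE}_{opt}(W)\le\mathit{EE}^*$ for all $W$ and $\mathit{EE}_{opt}(W)\to\mathit{EE}^*$ as $W\to\infty$.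
   Context: Model: downlink OFDMA single cell with Rayleigh fading; $p_u$ is the minimum transmit power ensuring $\mathbb{P}(C_u\ge T_u)=c$, with $C_u=w_u\log_2(1+\mathit{SNR}_u/\Gamma)$, $\mathit{SNR}_u=p_uh_f\ell_u/(w_uN_0)$, $h_f$ exponential with mean $1/\tau$, $g=\tau/\ln(1/c)$. *)

theory Defs
  imports Complex_Main
begin

definition power :: "real \<Rightarrow> real \<Rightarrow> real \<Rightarrow> real \<Rightarrow> real \<Rightarrow> real \<Rightarrow> real" where
  "power g N0 \<Gamma> l T w = g * N0 * \<Gamma> / l * (2 powr (T / w) - 1) * w"

definition EE :: "'a set \<Rightarrow> ('a \<Rightarrow> real) \<Rightarrow> ('a \<Rightarrow> real) \<Rightarrow> real \<Rightarrow> real \<Rightarrow> real \<Rightarrow> real \<Rightarrow> ('a \<Rightarrow> real) \<Rightarrow> real" where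
  "EE U T l g N0 \<Gamma> c w = c * (\<Sum>u\<in>U. T u) / (\<Sum>u\<in>U. power g N0 \<Gamma> (l u) (T u) (w u))"

definition allocations :: "'a set \<Rightarrow> real \<Rightarrow> ('a \<Rightarrow> real) set" where
  "allocations U W = {w. (\<forall>u\<in>U. w u > 0) \<and> (\<Sum>u\<in>U. w u) = W}"

definition EE_opt :: "'a set \<Rightarrow> ('a \<Rightarrow> real) \<Rightarrow> ('a \<Rightarrow> real) \<Rightarrow> real \<Rightarrow> real \<Rightarrow> real \<Rightarrow> real \<Rightarrow> real \<Rightarrow> real" where
  "EE_opt U T l g N0 \<Gamma> c W = (SUP w\<in>allocations U W. EE U T l g N0 \<Gamma> c w)"

end

theory Submission
  imports Defs
begin

text \<open>The power needed to carry rate \<open>T\<close> over bandwidth \<open>w\<close> is proportional to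
  \<open>(2 powr (T/w) - 1) * w\<close>, which tends to its low-SNR limit \<open>T * ln 2\<close> as \<open>w \<rightarrow> \<infinity>\<close>
  (by \<open>1 + x \<le> exp x\<close> it is never below that limit).  Hence the total power of every
  allocation is at least \<open>g N0 \<Gamma> ln 2 \<Sum> T u / l u\<close>, so \<open>EE* \<ge> EE_opt\<close>, and the uniform
  allocation of a growing bandwidth attains this bound in the limit.\<close>

lemma powr_minus_one_times_tendsto:
  fixes a b :: real
  assumes "b > 0"
  shows "((\<lambda>x. (b powr (a / x) - 1) * x) \<longlongrightarrow> a * ln b) at_top"
proof -
  have "((\<lambda>t. b powr (a * t)) has_field_derivative b powr (a * 0) * ln b * a) (at 0)"
    using assms by (auto intro!: derivative_eq_intros)
  hence "((\<lambda>h. (b powr (a * h) - 1) / h) \<longlongrightarrow> a * ln b) (at 0)"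
    unfolding DERIV_def using assms by (simp add: mult.commute)
  hence "((\<lambda>h. (b powr (a * h) - 1) / h) \<longlongrightarrow> a * ln b) (at_right 0)"
    by (simp add: filterlim_at_split)
  hence "((\<lambda>x. (b powr (a * inverse x) - 1) / inverse x) \<longlongrightarrow> a * ln b) at_top"
    by (rule filterlim_compose[OF _ filterlim_inverse_at_right_top])
  then show ?thesis
    by (rule filterlim_cong[THEN iffD1, rotated 3]) (auto simp: divide_inverse)
qed

lemma times_ln_le_powr_minus_one_times:
  fixes a b w :: real
  assumes "b > 0" and "w > 0"
  shows "a * ln b \<le> (b powr (a / w) - 1) * w"
proof -
  have "1 + a / w * ln b \<le> exp (a / w * ln b)" by (rule exp_ge_add_one_self)
  also have "\<dots> = b powr (a / w)" using assms by (simp add: powr_def)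
  finally have "a / w * ln b * w \<le> (b powr (a / w) - 1) * w"
    using assms by (intro mult_right_mono) auto
  thus ?thesis using assms by simp
qed

lemma power_ge_low_snr:
  assumes "g * N0 * \<Gamma> \<ge> 0" and "l > 0" and "w > 0"
  shows "g * N0 * \<Gamma> * ln 2 * (T / l) \<le> power g N0 \<Gamma> l T w"
proof -
  have "g * N0 * \<Gamma> / l * (T * ln 2) \<le> g * N0 * \<Gamma> / l * ((2 powr (T / w) - 1) * w)"
    using assms by (intro mult_left_mono times_ln_le_powr_minus_one_times) auto
  thus ?thesis unfolding power_def by (simp add: field_simps)
qed

lemma power_tendsto_low_snr:
  "(power g N0 \<Gamma> l T \<longlongrightarrow> g * N0 * \<Gamma> * ln 2 * (T / l)) at_top"
proof -
  have "((\<lambda>w. g * N0 * \<Gamma> / l * ((2 powr (T / w) - 1) * w))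
          \<longlongrightarrow> g * N0 * \<Gamma> / l * (T * ln 2)) at_top"
    by (intro tendsto_mult_left powr_minus_one_times_tendsto) simp
  thus ?thesis unfolding power_def by (simp add: field_simps)
qed

lemma EE_le_low_snr_bound:
  assumes "finite U" and "\<forall>u\<in>U. T u > 0" and "\<forall>u\<in>U. l u > 0"
    and "g * N0 * \<Gamma> > 0" and "c \<ge> 0" and "w \<in> allocations U W"
  shows "EE U T l g N0 \<Gamma> c w
         \<le> c * (\<Sum>u\<in>U. T u) / (g * N0 * \<Gamma> * ln 2 * (\<Sum>u\<in>U. T u / l u))"
proof (cases "U = {}")
  case False
  have "0 < (\<Sum>u\<in>U. T u / l u)" using assms False by (intro sum_pos) auto
  hence "0 < g * N0 * \<Gamma> * ln 2 * (\<Sum>u\<in>U. T u / l u)" using assms by simp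
  moreover have "g * N0 * \<Gamma> * ln 2 * (\<Sum>u\<in>U. T u / l u)
                 \<le> (\<Sum>u\<in>U. power g N0 \<Gamma> (l u) (T u) (w u))"
    unfolding sum_distrib_left using assms
    by (intro sum_mono power_ge_low_snr) (auto simp: allocations_def)
  moreover have "0 \<le> c * (\<Sum>u\<in>U. T u)"
    using assms by (intro mult_nonneg_nonneg sum_nonneg) auto
  ultimately show ?thesis unfolding EE_def by (intro divide_left_mono) auto
qed (simp add: EE_def)

lemma EE_uniform_tendsto_low_snr_bound:
  assumes "finite U" and "U \<noteq> {}" and "\<forall>u\<in>U. T u > 0" and "\<forall>u\<in>U. l u > 0"
    and "g * N0 * \<Gamma> > 0"
  shows "((\<lambda>W. EE U T l g N0 \<Gamma> c (\<lambda>_. W / card U))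
          \<longlongrightarrow> c * (\<Sum>u\<in>U. T u) / (g * N0 * \<Gamma> * ln 2 * (\<Sum>u\<in>U. T u / l u))) at_top"
proof -
  have "filterlim (\<lambda>W. W / card U) at_top at_top"
    unfolding divide_inverse using assms
    by (intro filterlim_at_top_mult_tendsto_pos[OF tendsto_const] filterlim_ident)
       (auto simp: card_gt_0_iff)
  hence "((\<lambda>W. \<Sum>u\<in>U. power g N0 \<Gamma> (l u) (T u) (W / card U))
          \<longlongrightarrow> (\<Sum>u\<in>U. g * N0 * \<Gamma> * ln 2 * (T u / l u))) at_top"
    by (intro tendsto_sum filterlim_compose[OF power_tendsto_low_snr])
  moreover have "0 < (\<Sum>u\<in>U. T u / l u)" using assms by (intro sum_pos) auto
  ultimately show ?thesis using assms
    unfolding EE_def sum_distrib_left[symmetric] by (intro tendsto_intros) auto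
qed

theorem lemma2:
  fixes U :: "'a set" and T l :: "'a \<Rightarrow> real" and g N0 \<Gamma> c :: real
  assumes "finite U" and "U \<noteq> {}"
    and "\<forall>u\<in>U. T u > 0" and "\<forall>u\<in>U. l u > 0"
    and "g > 0" and "N0 > 0" and "\<Gamma> > 0" and "0 < c" and "c < 1"
  defines "EEstar \<equiv> c * (\<Sum>u\<in>U. T u) / (g * N0 * \<Gamma> * ln 2 * (\<Sum>u\<in>U. T u / l u))"
  shows "(\<forall>W>0. EE_opt U T l g N0 \<Gamma> c W \<le> EEstar)
       \<and> ((\<lambda>W. EE_opt U T l g N0 \<Gamma> c W) \<longlongrightarrow> EEstar) at_top"
proof -
  have K: "g * N0 * \<Gamma> > 0" using assms by simp
  have bound: "EE U T l g N0 \<Gamma> c w \<le> EEstar" if "w \<in> allocations U W" for w W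
    unfolding EEstar_def using assms K that by (intro EE_le_low_snr_bound) auto
  have uniform: "(\<lambda>_. W / card U) \<in> allocations U W" if "W > 0" for W
    using that assms by (auto simp: allocations_def card_gt_0_iff)
  have upper: "EE_opt U T l g N0 \<Gamma> c W \<le> EEstar" if "W > 0" for W
    unfolding EE_opt_def using uniform[OF that] bound by (intro cSUP_least) auto
  have lower: "EE U T l g N0 \<Gamma> c (\<lambda>_. W / card U) \<le> EE_opt U T l g N0 \<Gamma> c W"
    if "W > 0" for W
    unfolding EE_opt_def using uniform[OF that] bound
    by (intro cSUP_upper bdd_aboveI2) auto
  have "((\<lambda>W. EE_opt U T l g N0 \<Gamma> c W) \<longlongrightarrow> EEstar) at_top"
  proof (rule tendsto_sandwich[OF _ _ _ tendsto_const])
    show "((\<lambda>W. EE U T l g N0 \<Gamma> c (\<lambda>_. W / card U)) \<longlongrightarrow> EEstar) at_top"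
      unfolding EEstar_def using assms K by (intro EE_uniform_tendsto_low_snr_bound) auto
    show "\<forall>\<^sub>F W in at_top. EE U T l g N0 \<Gamma> c (\<lambda>_. W / card U) \<le> EE_opt U T l g N0 \<Gamma> c W"
      using eventually_gt_at_top[of 0] by (rule eventually_mono) (rule lower)
    show "\<forall>\<^sub>F W in at_top. EE_opt U T l g N0 \<Gamma> c W \<le> EEstar"
      using eventually_gt_at_top[of 0] by (rule eventually_mono) (rule upper)
  qed
  with upper show ?thesis by blast
qed

end
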